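(* Let $E\subset F$ be differential fields of characteristic zero with the same algebraically closed field of constants $C$. Suppose there is $x\in E$ with $x'=1$, and let $y,z\in F$ be such that $y'\in E$, $y$ is transcendental over $E$, $z\in E(y)$ and $z'=y$. Then $z=Ay+B$ for some $A,B\in E$. *)

theory Defs
  imports "HOL-Computational_Algebra.Polynomial"
begin

definition derivation :: "('a::field \<Rightarrow> 'a) \<Rightarrow> bool" where
  "derivation D \<longleftrightarrow> (\<forall>a b. D (a + b) = D a + D b) \<and> (\<forall>a b. D (a * b) = D a * b + a * D b)"

definition is_subfield :: "'a::field set \<Rightarrow> bool" where
  "is_subfield K \<longleftrightarrow> 0 \<in> K \<and> 1 \<in> K \<and> (\<forall>a\<in>K. \<forall>b\<in>K. a + b \<in> K \<and> a * b \<in> K)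
     \<and> (\<forall>a\<in>K. - a \<in> K) \<and> (\<forall>a\<in>K. a \<noteq> 0 \<longrightarrow> inverse a \<in> K)"

definition differential_subfield :: "('a::field \<Rightarrow> 'a) \<Rightarrow> 'a set \<Rightarrow> bool" where
  "differential_subfield D E \<longleftrightarrow> is_subfield E \<and> (\<forall>a\<in>E. D a \<in> E)"

definition constants :: "('a::field \<Rightarrow> 'a) \<Rightarrow> 'a set" where
  "constants D = {c. D c = 0}"

definition field_adjoin :: "'a::field set \<Rightarrow> 'a \<Rightarrow> 'a set" where
  "field_adjoin E y = \<Inter>{K. is_subfield K \<and> E \<subseteq> K \<and> y \<in> K}"

definition transcendental_over :: "'a::field set \<Rightarrow> 'a \<Rightarrow> bool" where
  "transcendental_over E y \<longleftrightarrow> (\<forall>p. p \<noteq> 0 \<and> set (coeffs p) \<subseteq> E \<longrightarrow> poly p y \<noteq> 0)"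

definition alg_closed_subfield :: "'a::field set \<Rightarrow> bool" where
  "alg_closed_subfield C \<longleftrightarrow> is_subfield C \<and>
     (\<forall>p. set (coeffs p) \<subseteq> C \<and> degree p \<ge> 1 \<longrightarrow> (\<exists>c\<in>C. poly p c = 0))"

end

theory Submission
  imports Defs
begin

text \<open>
  Write z = p(y) / q(y) with p, q \<in> E[X]. As y' \<in> E, differentiation on E[y] is induced by the
  derivation p \<mapsto> p^D + y' p' of E[X] that extends D by X' = y'. On a monic q of degree n \<ge> 1
  it lowers the degree without vanishing: its coefficient of degree n - 1 is (c + n y)', where c is
  the coefficient of q of that degree, and c + n y is not a constant because y \<notin> E.
  Differentiating z q(y) = p(y) therefore gives z a denominator of smaller degree unless q is
  constant, so z = p(y). Comparing coefficients in p^D + y' p' = X, which holds because y is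
  transcendental, a degree m \<ge> 2 of p would make its leading coefficient c_m a constant, and then
  also c_(m-1) + m c_m y - [m = 2] x, again contradicting y \<notin> E.
\<close>

lemma derivation_add: "derivation D \<Longrightarrow> D (a + b) = D a + D b"
  unfolding derivation_def by blast

lemma derivation_mult: "derivation D \<Longrightarrow> D (a * b) = D a * b + a * D b"
  unfolding derivation_def by blast

lemma derivation_zero: "derivation D \<Longrightarrow> D 0 = 0"
  using derivation_add[of D 0 0] by (metis add_cancel_right_right add_0)

lemma derivation_one: "derivation D \<Longrightarrow> D 1 = 0"
  using derivation_mult[of D 1 1] by (metis add_cancel_right_right mult_1 mult_1_right)

lemma derivation_minus: "derivation D \<Longrightarrow> D (- a) = - D a"
  using derivation_add[of D a "- a"] by (simp add: derivation_zero eq_neg_iff_add_eq_0 add.commute)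

lemma derivation_diff: "derivation D \<Longrightarrow> D (a - b) = D a - D b"
  using derivation_add[of D a "- b"] by (simp add: derivation_minus)

lemma derivation_of_nat: "derivation D \<Longrightarrow> D (of_nat n) = 0"
  by (induction n) (simp_all add: derivation_zero derivation_one derivation_add)

lemma subfield_diff: "is_subfield E \<Longrightarrow> a \<in> E \<Longrightarrow> b \<in> E \<Longrightarrow> a - b \<in> E"
  unfolding is_subfield_def by (metis diff_conv_add_uminus)

lemma subfield_divide: "is_subfield E \<Longrightarrow> a \<in> E \<Longrightarrow> b \<in> E \<Longrightarrow> a / b \<in> E"
  unfolding is_subfield_def by (metis divide_inverse inverse_zero)

lemma subfield_of_nat: "is_subfield E \<Longrightarrow> of_nat n \<in> E"
  by (induction n) (auto simp: is_subfield_def)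

lemma subfield_sum: "is_subfield E \<Longrightarrow> (\<And>i. i \<in> A \<Longrightarrow> f i \<in> E) \<Longrightarrow> sum f A \<in> E"
  by (induction A rule: infinite_finite_induct) (auto simp: is_subfield_def)

lemma subfield_affine_mem_imp_zero:
  assumes "is_subfield E" "y \<notin> E" "a \<in> E" "b \<in> E" "a * y + b \<in> E"
  shows "a = 0"
proof (rule ccontr)
  assume "a \<noteq> 0"
  then have "y = (a * y + b - b) / a" by simp
  also have "\<dots> \<in> E" using assms by (intro subfield_divide subfield_diff)
  finally show False using assms(2) by simp
qed

lemma constant_affine_imp_zero:
  assumes "is_subfield E" "constants D \<subseteq> E" "y \<notin> E" "a \<in> E" "b \<in> E" "D (a * y + b) = 0"
  shows "a = 0"
  using assms subfield_affine_mem_imp_zero[of E y a b] by (auto simp: constants_def)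

definition poly_over :: "'a::field set \<Rightarrow> 'a poly \<Rightarrow> bool" where
  "poly_over E p \<longleftrightarrow> (\<forall>i. coeff p i \<in> E)"

lemma poly_over_monom: "is_subfield E \<Longrightarrow> a \<in> E \<Longrightarrow> poly_over E (monom a n)"
  by (auto simp: poly_over_def is_subfield_def)

lemma poly_over_add: "is_subfield E \<Longrightarrow> poly_over E p \<Longrightarrow> poly_over E q \<Longrightarrow> poly_over E (p + q)"
  by (auto simp: poly_over_def is_subfield_def)

lemma poly_over_minus: "is_subfield E \<Longrightarrow> poly_over E p \<Longrightarrow> poly_over E (- p)"
  by (auto simp: poly_over_def is_subfield_def)

lemma poly_over_diff: "is_subfield E \<Longrightarrow> poly_over E p \<Longrightarrow> poly_over E q \<Longrightarrow> poly_over E (p - q)"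
  by (auto simp: poly_over_def subfield_diff)

lemma poly_over_mult: "is_subfield E \<Longrightarrow> poly_over E p \<Longrightarrow> poly_over E q \<Longrightarrow> poly_over E (p * q)"
  unfolding poly_over_def coeff_mult by (intro allI subfield_sum) (auto simp: is_subfield_def)

lemma poly_over_smult: "is_subfield E \<Longrightarrow> a \<in> E \<Longrightarrow> poly_over E p \<Longrightarrow> poly_over E (smult a p)"
  by (auto simp: poly_over_def is_subfield_def)

lemma poly_over_pderiv: "is_subfield E \<Longrightarrow> poly_over E p \<Longrightarrow> poly_over E (pderiv p)"
  by (auto simp: poly_over_def coeff_pderiv is_subfield_def subfield_of_nat)

lemma poly_over_map_poly:
  "f 0 = 0 \<Longrightarrow> (\<And>a. a \<in> E \<Longrightarrow> f a \<in> E) \<Longrightarrow> poly_over E p \<Longrightarrow> poly_over E (map_poly f p)"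
  by (auto simp: poly_over_def coeff_map_poly)

lemma transcendental_over_poly_eq_0:
  assumes "transcendental_over E y" "poly_over E p" "poly p y = 0"
  shows "p = 0"
proof -
  have "set (coeffs p) \<subseteq> E" using assms(2) by (auto simp: poly_over_def coeffs_def)
  then show ?thesis using assms(1,3) unfolding transcendental_over_def by blast
qed

lemma transcendental_over_not_mem:
  assumes "is_subfield E" "transcendental_over E y"
  shows "y \<notin> E"
proof
  assume "y \<in> E"
  then have "poly_over E (monom 1 1 - monom y 0)"
    using assms(1) by (intro poly_over_diff poly_over_monom) (auto simp: is_subfield_def)
  moreover have "poly (monom 1 1 - monom y 0) y = 0" by (simp add: poly_monom)
  ultimately have "monom 1 1 - monom y 0 = 0" by (rule transcendental_over_poly_eq_0[OF assms(2)])
  then have "coeff (monom 1 1 - monom y 0) 1 = 0" by simp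
  then show False by simp
qed

lemma poly_degree_le_1:
  fixes p :: "'a::comm_ring poly"
  assumes "degree p \<le> 1"
  shows "poly p y = coeff p 1 * y + coeff p 0"
proof -
  have "p = [:coeff p 0, coeff p 1:]"
    using assms by (intro poly_eqI) (auto simp: coeff_pCons coeff_eq_0 split: nat.split)
  then show ?thesis by (metis poly_pCons poly_0 mult_zero_right add_0_right mult.commute add.commute)
qed

lemma is_subfield_quotients:
  assumes E: "is_subfield E"
  shows "is_subfield {poly p y / poly q y | p q. poly_over E p \<and> poly_over E q \<and> poly q y \<noteq> 0}"
    (is "is_subfield ?S")
  unfolding is_subfield_def
proof (intro conjI ballI impI)
  have E01: "0 \<in> E" "1 \<in> E" using E by (auto simp: is_subfield_def)
  show "0 \<in> ?S" "1 \<in> ?S"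
    using poly_over_monom[OF E E01(1), of 0] poly_over_monom[OF E E01(2), of 0] by force+
next
  fix a b assume "a \<in> ?S" "b \<in> ?S"
  then obtain p1 q1 p2 q2 where h: "poly_over E p1" "poly_over E q1" "poly q1 y \<noteq> 0"
    "a = poly p1 y / poly q1 y" "poly_over E p2" "poly_over E q2" "poly q2 y \<noteq> 0"
    "b = poly p2 y / poly q2 y" by blast
  show "a + b \<in> ?S"
    using h by (intro CollectI exI[of _ "p1 * q2 + p2 * q1"] exI[of _ "q1 * q2"])
      (auto simp: poly_over_add poly_over_mult E add_frac_eq)
  show "a * b \<in> ?S"
    using h by (intro CollectI exI[of _ "p1 * p2"] exI[of _ "q1 * q2"]) (auto simp: poly_over_mult E)
next
  fix a assume "a \<in> ?S"
  then obtain p q where h: "poly_over E p" "poly_over E q" "poly q y \<noteq> 0"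
    "a = poly p y / poly q y" by blast
  show "- a \<in> ?S"
    using h by (intro CollectI exI[of _ "- p"] exI[of _ q]) (auto simp: poly_over_minus E)
  assume "a \<noteq> 0"
  then show "inverse a \<in> ?S"
    using h by (intro CollectI exI[of _ q] exI[of _ p]) (auto simp: inverse_eq_divide)
qed

lemma field_adjoin_subset_quotients:
  assumes E: "is_subfield E"
  shows "field_adjoin E y \<subseteq> {poly p y / poly q y | p q. poly_over E p \<and> poly_over E q \<and> poly q y \<noteq> 0}"
    (is "_ \<subseteq> ?S")
proof -
  have "1 \<in> E" using E by (simp add: is_subfield_def)
  have "e \<in> ?S" if "e \<in> E" for e
  proof -
    have "e = poly (monom e 0) y / poly (monom 1 0) y" by (simp add: poly_monom)
    then show ?thesis using that \<open>1 \<in> E\<close> poly_over_monom[OF E] by fastforce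
  qed
  moreover have "y \<in> ?S"
  proof -
    have "y = poly (monom 1 1) y / poly (monom 1 0) y" by (simp add: poly_monom)
    then show ?thesis using \<open>1 \<in> E\<close> poly_over_monom[OF E] by fastforce
  qed
  ultimately show ?thesis
    unfolding field_adjoin_def using is_subfield_quotients[OF E] by (intro Inter_lower) blast
qed

definition poly_derivation :: "('a::field \<Rightarrow> 'a) \<Rightarrow> 'a \<Rightarrow> 'a poly \<Rightarrow> 'a poly" where
  "poly_derivation D a p = map_poly D p + smult a (pderiv p)"

lemma derivation_poly:
  assumes "derivation D"
  shows "D (poly p y) = poly (poly_derivation D (D y) p) y"
proof (induction p)
  case (pCons c p)
  have "D (poly (pCons c p) y) = D c + (D y * poly p y + y * D (poly p y))"
    using assms by (simp add: derivation_add derivation_mult)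
  with pCons.IH show ?case
    using assms
    by (simp add: poly_derivation_def map_poly_pCons derivation_zero pderiv_pCons algebra_simps)
qed (simp add: assms derivation_zero poly_derivation_def)

lemma coeff_poly_derivation:
  "derivation D \<Longrightarrow>
     coeff (poly_derivation D a p) i = D (coeff p i) + a * (of_nat (Suc i) * coeff p (Suc i))"
  by (simp add: poly_derivation_def coeff_map_poly derivation_zero coeff_pderiv)

lemma poly_over_poly_derivation:
  assumes "derivation D" "differential_subfield D E" "a \<in> E" "poly_over E p"
  shows "poly_over E (poly_derivation D a p)"
  using assms unfolding poly_derivation_def differential_subfield_def
  by (intro poly_over_add poly_over_smult poly_over_pderiv poly_over_map_poly) (auto simp: derivation_zero)

lemma degree_poly_derivation_less:
  assumes "derivation D" "D (lead_coeff q) = 0" "degree q \<noteq> 0"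
  shows "degree (poly_derivation D a q) < degree q"
proof -
  have "coeff (poly_derivation D a q) i = 0" if "i \<ge> degree q" for i
  proof (cases "i = degree q")
    case True
    then show ?thesis using assms(1,2) by (simp add: coeff_poly_derivation coeff_eq_0)
  next
    case False
    then show ?thesis
      using that assms(1) by (simp add: coeff_poly_derivation coeff_eq_0 derivation_zero)
  qed
  then have "degree (poly_derivation D a q) \<le> degree q - 1" by (intro degree_le) auto
  with assms(3) show ?thesis by linarith
qed

lemma poly_derivation_monic_nonzero:
  fixes D :: "'a::field_char_0 \<Rightarrow> 'a"
  assumes D: "derivation D" and E: "is_subfield E" and C: "constants D \<subseteq> E" and "y \<notin> E"
    and q: "poly_over E q" "lead_coeff q = 1" "degree q \<noteq> 0"
  shows "poly_derivation D (D y) q \<noteq> 0"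
proof
  assume "poly_derivation D (D y) q = 0"
  define n where "n = degree q"
  have "Suc (n - 1) = n" using q(3) by (simp add: n_def)
  have "D (of_nat n * y + coeff q (n - 1)) = D (coeff q (n - 1)) + D y * of_nat n"
    using D by (simp add: derivation_add derivation_mult derivation_of_nat mult.commute)
  also have "\<dots> = coeff (poly_derivation D (D y) q) (n - 1)"
    using D q(2) \<open>Suc (n - 1) = n\<close> by (simp add: n_def coeff_poly_derivation)
  also have "\<dots> = 0" using \<open>poly_derivation D (D y) q = 0\<close> by simp
  finally have "D (of_nat n * y + coeff q (n - 1)) = 0" .
  moreover have "of_nat n \<in> E" "coeff q (n - 1) \<in> E"
    using subfield_of_nat[OF E] q(1) by (auto simp: poly_over_def)
  ultimately have "of_nat n = (0::'a)" using constant_affine_imp_zero[OF E C \<open>y \<notin> E\<close>] by blast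
  with q(3) show False by (simp add: n_def)
qed

lemma poly_over_monic_denominator:
  assumes E: "is_subfield E"
    and pq: "poly_over E p" "poly_over E q" "q \<noteq> 0" "z * poly q y = poly p y"
  obtains p1 q1 where "poly_over E p1" "poly_over E q1" "lead_coeff q1 = 1" "degree q1 = degree q"
    "z * poly q1 y = poly p1 y"
proof
  define u where "u = inverse (lead_coeff q)"
  have "lead_coeff q \<in> E" "lead_coeff q \<noteq> 0" using pq(2,3) by (auto simp: poly_over_def)
  then have "u \<in> E" using E by (simp add: u_def is_subfield_def)
  then show "poly_over E (smult u p)" "poly_over E (smult u q)"
    using E pq(1,2) by (auto simp: poly_over_smult)
  show "lead_coeff (smult u q) = 1" "degree (smult u q) = degree q"
    using pq(3) by (auto simp: u_def)
  show "z * poly (smult u q) y = poly (smult u p) y"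
    using pq(4) by simp
qed

lemma antiderivative_of_poly_is_poly:
  fixes D :: "'a::field_char_0 \<Rightarrow> 'a"
  assumes D: "derivation D" and E: "differential_subfield D E" and C: "constants D \<subseteq> E"
    and y: "D y \<in> E" "y \<notin> E"
    and r: "poly_over E r" "D z = poly r y"
    and pq: "poly_over E p" "poly_over E q" "q \<noteq> 0" "z * poly q y = poly p y"
  shows "\<exists>s. poly_over E s \<and> z = poly s y"
  using pq
proof (induction "degree q" arbitrary: p q rule: less_induct)
  case less
  have E': "is_subfield E" using E by (simp add: differential_subfield_def)
  obtain p1 q1 where p1: "poly_over E p1" and q1: "poly_over E q1" and monic: "lead_coeff q1 = 1"
    and deg: "degree q1 = degree q" and zq1: "z * poly q1 y = poly p1 y"
    using poly_over_monic_denominator[OF E' less.prems] .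
  show ?case
  proof (cases "degree q = 0")
    case True
    then have "q1 = 1" using monic deg by (metis degree_0_id one_pCons)
    with zq1 p1 show ?thesis by auto
  next
    case False
    define Q where "Q = poly_derivation D (D y) q1"
    define P where "P = poly_derivation D (D y) p1 - r * q1"
    have "D (z * poly q1 y) = D (poly p1 y)" using zq1 by simp
    then have "z * poly Q y = poly P y"
      using r(2) by (simp add: Q_def P_def derivation_mult[OF D] derivation_poly[OF D] algebra_simps)
    moreover have "poly_over E Q" "poly_over E P"
      using D E y(1) p1 q1 r(1) E'
      by (auto simp: Q_def P_def poly_over_poly_derivation poly_over_diff poly_over_mult)
    moreover have "Q \<noteq> 0"
      using poly_derivation_monic_nonzero[OF D E' C y(2) q1 monic] False deg by (simp add: Q_def)
    moreover have "degree Q < degree q"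
      using degree_poly_derivation_less[OF D, of q1] monic False deg derivation_one[OF D]
      by (simp add: Q_def)
    ultimately show ?thesis using less.hyps by blast
  qed
qed

lemma degree_antiderivative_of_identity_le_1:
  fixes D :: "'a::field_char_0 \<Rightarrow> 'a"
  assumes D: "derivation D" and E: "differential_subfield D E" and C: "constants D \<subseteq> E"
    and x: "x \<in> E" "D x = 1" and y: "D y \<in> E" "transcendental_over E y"
    and p: "poly_over E p" "D (poly p y) = y"
  shows "degree p \<le> 1"
proof (rule ccontr)
  assume "\<not> degree p \<le> 1"
  define m where "m = degree p"
  have m: "m \<ge> 2" "Suc (m - 1) = m" using \<open>\<not> degree p \<le> 1\<close> by (auto simp: m_def)
  have E': "is_subfield E" using E by (simp add: differential_subfield_def)
  have "poly_over E (poly_derivation D (D y) p - monom 1 1)"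
    using D E y(1) p(1) E' by (auto intro!: poly_over_diff poly_over_monom poly_over_poly_derivation
        simp: is_subfield_def)
  moreover have "poly (poly_derivation D (D y) p - monom 1 1) y = 0"
    using p(2) by (simp add: derivation_poly[OF D, symmetric] poly_monom)
  ultimately have "poly_derivation D (D y) p - monom 1 1 = 0"
    by (rule transcendental_over_poly_eq_0[OF y(2)])
  then have "poly_derivation D (D y) p = monom 1 1" by simp
  then have coeff_eq: "D (coeff p i) + D y * (of_nat (Suc i) * coeff p (Suc i)) = coeff (monom 1 1) i" for i
    by (metis coeff_poly_derivation[OF D])
  define c c1 where "c = coeff p m" and "c1 = coeff p (m - 1)"
  have "D c = 0" using coeff_eq[of m] m by (simp add: c_def m_def coeff_eq_0)
  have "D c1 + D y * (of_nat m * c) = (if m = 2 then 1 else 0)"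
    using coeff_eq[of "m - 1"] m by (auto simp: c_def c1_def)
  then have "D (of_nat m * c * y + (c1 - (if m = 2 then x else 0))) = 0"
    using D \<open>D c = 0\<close> x(2)
    by (simp add: derivation_add derivation_diff derivation_mult derivation_of_nat derivation_zero
        algebra_simps)
  moreover have "of_nat m * c \<in> E" "c1 - (if m = 2 then x else 0) \<in> E"
    using p(1) x(1) E' subfield_of_nat[OF E']
    by (auto simp: c_def c1_def poly_over_def is_subfield_def intro: subfield_diff)
  ultimately have "of_nat m * c = 0"
    using constant_affine_imp_zero[OF E' C transcendental_over_not_mem[OF E' y(2)]] by blast
  moreover have "c \<noteq> 0" using m by (auto simp: c_def m_def)
  ultimately show False using m by simp
qed

theorem lemma30:
  fixes D :: "'a::field_char_0 \<Rightarrow> 'a" and E :: "'a set" and x y z :: 'a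
  assumes "derivation D"
    and "differential_subfield D E"
    and "constants D \<subseteq> E"
    and "alg_closed_subfield (constants D)"
    and "x \<in> E" and "D x = 1"
    and "D y \<in> E" and "transcendental_over E y"
    and "z \<in> field_adjoin E y" and "D z = y"
  shows "\<exists>A\<in>E. \<exists>B\<in>E. z = A * y + B"
proof -
  have E: "is_subfield E" using assms(2) by (simp add: differential_subfield_def)
  obtain p q where pq: "poly_over E p" "poly_over E q" "poly q y \<noteq> 0" "z = poly p y / poly q y"
    using field_adjoin_subset_quotients[OF E] assms(9) by blast
  then have "q \<noteq> 0" "z * poly q y = poly p y" by auto
  moreover have "poly_over E (monom 1 1)" "D z = poly (monom 1 1) y"
    using E assms(10) by (auto simp: poly_over_monom is_subfield_def poly_monom)
  ultimately obtain s where s: "poly_over E s" "z = poly s y"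
    using antiderivative_of_poly_is_poly[OF assms(1-3,7) transcendental_over_not_mem[OF E assms(8)]]
      pq(1,2) by blast
  then have "degree s \<le> 1"
    using degree_antiderivative_of_identity_le_1[OF assms(1-3,5-8)] assms(10) by blast
  then have "z = coeff s 1 * y + coeff s 0" using s(2) poly_degree_le_1 by blast
  with s(1) show ?thesis by (auto simp: poly_over_def)
qed

end
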